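(* For every integer $m\geq 1$, \[ \begin{pmatrix}\delta^s_2\big((s_1^2+s_2^2)^m\big)\\ -\delta^s_1\big((s_1^2+s_2^2)^m\big)\end{pmatrix}\in \mathrm{Vect}(\mathbb{C}^s_{\langle 2\rangle}\,|\,\tau), \] where $s_1,s_2$, $\tau$, $\delta^s$ and $\mathrm{Vect}(\mathbb{C}^s_{\langle 2\rangle}|\tau)$ are as in the context with $n=2$.
   Context: Let $n\geq 1$ (here $n=2$), let $\{e_1,\dots,e_n\}$ be an orthonormal basis of $\mathbb{C}^n$ and $\{f_1,\dots,f_n\}$ the standard basis of $\mathbb{C}^n$. The full Fock space is $\mathcal{F}(\mathbb{C}^n)=\mathbb{C}1\oplus\bigoplus_{k\geq1}(\mathbb{C}^n)^{\otimes k}$ with vacuum vector $1$. For a word $w=i_1\cdots i_k$ over the alphabet $[n]=\{1,\dots,n\}$ put $e_w=e_{i_1}\otimes\cdots\otimes e_{i_k}$ (and $e_\epsilon=1$ for the empty word). Let $l_j$ be the left creation operator $l_je_w=e_{jw}$, and $s_j=l_j+l_j^*$ ($j=1,\dots,n$); these form a free semicircular system with respect to the vacuum state $\tau(x)=\langle x1,1\rangle$. Let $\mathbb{C}^s_{\langle n\rangle}$ be the unital algebra generated by $s_1,\dots,s_n$. The cyclic gradient $\delta^s=(\delta^s_1,\dots,\delta^s_n):\mathbb{C}^s_{\langle n\rangle}\to(\mathbb{C}^s_{\langle n\rangle})^n$ is the linear map with $\delta^s(s_{i_1}\cdots s_{i_p})=\sum_{j=1}^p s_{i_{j+1}}\cdots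 s_{i_p}s_{i_1}\cdots s_{i_{j-1}}\otimes f_{i_j}$ (identifying $(\mathbb{C}^s_{\langle n\rangle})^n\cong \mathbb{C}^s_{\langle n\rangle}\otimes\mathbb{C}^n$), i.e. $\delta^s_j(s_{i_1}\cdots s_{i_p})=\sum_{m:\,i_m=j}s_{i_{m+1}}\cdots s_{i_p}s_{i_1}\cdots s_{i_{m-1}}$. The free divergence-free vector field is $\mathrm{Vect}(\mathbb{C}^s_{\langle n\rangle}|\tau)=\{(p_1,\dots,p_n)\in(\mathbb{C}^s_{\langle n\rangle})^n : \sum_{j=1}^n\tau(p_j\,\delta^s_j[r])=0 \text{ for all } r\in\mathbb{C}^s_{\langle n\rangle}\}$. *)

theory Defs
  imports Complex_Main
begin

text \<open>Full Fock space over C^n with orthonormal basis e_i indexed by natural numbers: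
  a vector is a function from words (nat list) to complex coefficients; e_w is the
  indicator of the word w, the vacuum is the indicator of the empty word.\<close>

type_synonym fock = "nat list \<Rightarrow> complex"

definition vac :: fock where
  "vac = (\<lambda>w. if w = [] then 1 else 0)"

text \<open>left creation l_j e_w = e_{jw}\<close>
definition lcr :: "nat \<Rightarrow> fock \<Rightarrow> fock" where
  "lcr j v = (\<lambda>w. case w of [] \<Rightarrow> 0 | i # u \<Rightarrow> (if i = j then v u else 0))"

definition lann :: "nat \<Rightarrow> fock \<Rightarrow> fock" where
  "lann j v = (\<lambda>w. v (j # w))"

definition semi :: "nat \<Rightarrow> fock \<Rightarrow> fock" where
  "semi j v = (\<lambda>w. lcr j v w + lann j v w)"

definition mono_op :: "nat list \<Rightarrow> fock \<Rightarrow> fock" where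
  "mono_op w = foldr (\<lambda>i f. semi i \<circ> f) w id"

text \<open>vacuum state tau(x) = <x 1, 1> on a monomial\<close>
definition tau_word :: "nat list \<Rightarrow> complex" where
  "tau_word w = mono_op w vac []"

text \<open>Elements of C^s_<n> as finite linear combinations of monomials in s_1..s_n
  (list of coefficient/word pairs).\<close>
type_synonym spoly = "(complex \<times> nat list) list"

definition tauP :: "spoly \<Rightarrow> complex" where
  "tauP p = (\<Sum>(c, w)\<leftarrow>p. c * tau_word w)"

definition mulP :: "spoly \<Rightarrow> spoly \<Rightarrow> spoly" where
  "mulP p q = [(c * d, u @ v). (c, u) \<leftarrow> p, (d, v) \<leftarrow> q]"

definition addP :: "spoly \<Rightarrow> spoly \<Rightarrow> spoly" where
  "addP p q = p @ q"

definition negP :: "spoly \<Rightarrow> spoly" where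
  "negP p = map (\<lambda>(c, w). (- c, w)) p"

definition oneP :: spoly where
  "oneP = [(1, [])]"

definition genP :: "nat \<Rightarrow> spoly" where
  "genP j = [(1, [j])]"

fun powP :: "spoly \<Rightarrow> nat \<Rightarrow> spoly" where
  "powP p 0 = oneP"
| "powP p (Suc k) = mulP p (powP p k)"

text \<open>cyclic derivative delta_j on the monomial s_{i_1}...s_{i_p}:
  sum over positions m with i_m = j of s_{i_{m+1}}...s_{i_p} s_{i_1}...s_{i_{m-1}}\<close>
definition cgrad_word :: "nat \<Rightarrow> nat list \<Rightarrow> spoly" where
  "cgrad_word j w = [(1, drop (Suc k) w @ take k w). k \<leftarrow> [0..<length w], w ! k = j]"

definition cgradP :: "nat \<Rightarrow> spoly \<Rightarrow> spoly" where
  "cgradP j p = concat (map (\<lambda>(c, w). map (\<lambda>(d, v). (c * d, v)) (cgrad_word j w)) p)"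

definition inAlg :: "nat \<Rightarrow> spoly \<Rightarrow> bool" where
  "inAlg n p = (\<forall>(c, w) \<in> set p. set w \<subseteq> {1..n})"

text \<open>Vect(C^s_<n> | tau), vector fields given as functions on {1..n}\<close>
definition inVect :: "nat \<Rightarrow> (nat \<Rightarrow> spoly) \<Rightarrow> bool" where
  "inVect n P = ((\<forall>j\<in>{1..n}. inAlg n (P j)) \<and>
     (\<forall>r. inAlg n r \<longrightarrow> (\<Sum>j=1..n. tauP (mulP (P j) (cgradP j r))) = 0))"

end

theory Submission
  imports Defs
begin

text \<open>Put \<open>Q = s\<^sub>1\<^sup>2 + s\<^sub>2\<^sup>2\<close> and \<open>p\<^sub>a = s\<^sub>a Q\<^sup>n + Q\<^sup>n s\<^sub>a\<close>. Then \<open>\<delta>\<^sub>a(Q\<^sup>n\<^sup>+\<^sup>1) = (n + 1) p\<^sub>a\<close>, so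
  the divergence condition for a monomial \<open>s\<^sub>w\<close> reads \<open>\<tau>(p\<^sub>2 \<delta>\<^sub>1 s\<^sub>w) = \<tau>(p\<^sub>1 \<delta>\<^sub>2 s\<^sub>w)\<close>. This is
  proved by strong induction on \<open>n\<close>, expanding the distinguished letter \<open>s\<^sub>a\<close> of \<open>p\<^sub>a\<close> with the
  Schwinger--Dyson equation of the semicircular moments. If its partner lies in \<open>Q\<^sup>n\<close>, a factor
  \<open>\<tau>(Q\<^sup>i)\<close> splits off and the same expression for a smaller exponent remains. Otherwise the partner
  is a letter \<open>s\<^sub>b\<close> of \<open>w\<close> with \<open>b \<noteq> a\<close>, and the term depends symmetrically on the two arcs into
  which the two letters cut the cyclic word \<open>w\<close>; exchanging the roles of the two letters flips the
  sign, so these terms cancel in pairs.\<close>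

section \<open>Moments of the semicircular system\<close>

definition fock_basis :: "nat list \<Rightarrow> fock" where
  "fock_basis u = (\<lambda>t. if t = u then 1 else 0)"

lemma vac_eq_fock_basis: "vac = fock_basis []"
  by (simp add: vac_def fock_basis_def)

lemma mono_op_Nil [simp]: "mono_op [] v = v"
  by (simp add: mono_op_def)

lemma mono_op_Cons: "mono_op (i # w) v = semi i (mono_op w v)"
  by (simp add: mono_op_def)

lemma mono_op_append: "mono_op (w @ w') v = mono_op w (mono_op w' v)"
  by (induction w) (simp_all add: mono_op_Cons)

lemma mono_op_add: "mono_op w (\<lambda>t. f t + g t) = (\<lambda>t. mono_op w f t + mono_op w g t)"
  by (induction w) (auto simp: mono_op_Cons semi_def lcr_def lann_def split: list.split)

lemma mono_op_zero: "mono_op w (\<lambda>t. 0) = (\<lambda>t. 0)"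
  by (induction w) (auto simp: mono_op_Cons semi_def lcr_def lann_def split: list.split)

lemma semi_apply: "semi i v t = (case t of [] \<Rightarrow> 0 | a # u \<Rightarrow> if a = i then v u else 0) + v (i # t)"
  by (simp add: semi_def lcr_def lann_def)

text \<open>The matrix of \<open>s\<^sub>w\<close> in the basis \<open>e\<^sub>u\<close> is real and its transpose is the matrix of
  \<open>s\<^bsub>rev w\<^esub>\<close>, since each \<open>s\<^sub>i\<close> is a real symmetric operator. This is what makes \<open>\<tau>\<close>
  tracial below.\<close>
lemma mono_op_fock_basis_transpose:
  "mono_op w (fock_basis u) t = mono_op (rev w) (fock_basis t) u"
proof (induction w arbitrary: u t)
  case Nil
  then show ?case by (simp add: fock_basis_def)
next
  case (Cons i w)
  have "semi i (fock_basis t) =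
      (\<lambda>x. fock_basis (i # t) x + (case t of [] \<Rightarrow> 0 | a # t' \<Rightarrow> if a = i then fock_basis t' x else 0))"
    by (auto simp: semi_apply fock_basis_def split: list.split)
  then have "mono_op (rev (i # w)) (fock_basis t) u =
      mono_op (rev w) (fock_basis (i # t)) u
      + (case t of [] \<Rightarrow> 0 | a # t' \<Rightarrow> if a = i then mono_op (rev w) (fock_basis t') u else 0)"
    by (cases t) (auto simp: mono_op_append mono_op_Cons mono_op_add mono_op_zero)
  then show ?case
    by (auto simp: mono_op_Cons semi_apply Cons.IH split: list.split)
qed

lemma tau_word_rev: "tau_word (rev w) = tau_word w"
  using mono_op_fock_basis_transpose[of w "[]" "[]"]
  by (simp add: tau_word_def vac_eq_fock_basis)

text \<open>The letter \<open>j\<close> of the output is created by some factor \<open>s\<^sub>j\<close> of \<open>s\<^sub>w\<close>; the factors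
  on its right then produce \<open>z\<close> from the vacuum and those on its left produce \<open>y\<close>.\<close>
lemma mono_op_vac_split:
  "mono_op w vac (y @ j # z) =
    (\<Sum>k<length w. if w ! k = j then mono_op (take k w) vac y * mono_op (drop (Suc k) w) vac z else 0)"
proof (induction w arbitrary: y)
  case Nil
  then show ?case by (simp add: vac_def)
next
  case (Cons i w)
  have shift: "(\<Sum>k<length (i # w). if (i # w) ! k = j
        then mono_op (take k (i # w)) vac y * mono_op (drop (Suc k) (i # w)) vac z else 0)
      = (if i = j then vac y * mono_op w vac z else 0)
        + (\<Sum>k<length w. if w ! k = j then mono_op (i # take k w) vac y * mono_op (drop (Suc k) w) vac z else 0)"
    by (simp add: sum.lessThan_Suc_shift del: sum.lessThan_Suc cong: if_cong)
  show ?case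
  proof (cases y)
    case Nil
    have "mono_op (i # w) vac (y @ j # z) = (if i = j then mono_op w vac z else 0) + mono_op w vac ([i] @ j # z)"
      using Nil by (simp add: mono_op_Cons semi_apply)
    then show ?thesis
      unfolding shift Cons.IH using Nil by (simp add: mono_op_Cons semi_apply vac_def cong: if_cong)
  next
    case (Cons a u)
    have "mono_op (i # w) vac (y @ j # z) =
        (if a = i then mono_op w vac (u @ j # z) else 0) + mono_op w vac ((i # a # u) @ j # z)"
      using Cons by (simp add: mono_op_Cons semi_apply)
    then show ?thesis
      unfolding shift Cons.IH using Cons
      by (cases "a = i") (auto simp: mono_op_Cons semi_apply vac_def sum.distrib[symmetric] distrib_right
          intro!: sum.cong)
  qed
qed

lemma tau_word_Cons:
  "tau_word (j # z) =
    (\<Sum>k<length z. if z ! k = j then tau_word (take k z) * tau_word (drop (Suc k) z) else 0)"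
  using mono_op_vac_split[of z "[]" j "[]"] unfolding tau_word_def
  by (simp add: mono_op_Cons semi_apply)

lemma tau_word_snoc:
  "tau_word (z @ [j]) =
    (\<Sum>k<length z. if z ! k = j then tau_word (take k z) * tau_word (drop (Suc k) z) else 0)"
proof -
  have "tau_word (z @ [j]) = tau_word (j # rev z)"
    by (metis rev_append rev_singleton_conv tau_word_rev append_Cons append_Nil)
  also have "\<dots> = (\<Sum>k<length z. if z ! (length z - Suc k) = j
      then tau_word (drop (length z - k) z) * tau_word (take (length z - Suc k) z) else 0)"
    unfolding tau_word_Cons by (intro sum.cong) (auto simp: rev_nth take_rev drop_rev tau_word_rev)
  also have "\<dots> = (\<Sum>k<length z. if z ! k = j then tau_word (take k z) * tau_word (drop (Suc k) z) else 0)"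
    by (subst sum.nat_diff_reindex[symmetric]) (auto simp: Suc_diff_Suc mult.commute intro!: sum.cong)
  finally show ?thesis .
qed

lemma tau_word_rotate1: "tau_word (j # z) = tau_word (z @ [j])"
  unfolding tau_word_Cons tau_word_snoc ..

lemma tau_word_append_commute: "tau_word (u @ v) = tau_word (v @ u)"
proof (induction u arbitrary: v)
  case (Cons a u)
  have "tau_word ((a # u) @ v) = tau_word (u @ (v @ [a]))"
    by (simp add: tau_word_rotate1)
  also have "\<dots> = tau_word ((v @ [a]) @ u)"
    by (rule Cons.IH)
  finally show ?case by simp
qed simp

lemma tau_word_odd: "odd (length w) \<Longrightarrow> tau_word w = 0"
proof (induction "length w" arbitrary: w rule: less_induct)
  case less
  show ?case
  proof (cases w)
    case (Cons j z)
    have "tau_word (take k z) * tau_word (drop (Suc k) z) = 0" if "k < length z" for k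
      using less that Cons by (cases "even k") (auto intro!: less.hyps)
    then show ?thesis
      unfolding Cons tau_word_Cons by (intro sum.neutral) auto
  qed (use less.prems in simp)
qed

lemma sum_lessThan_add: "(\<Sum>p<a + b. f p) = (\<Sum>p<a. f p) + (\<Sum>q<b. f (a + q))" for a b :: nat
  by (induction b) (simp_all add: add.assoc)

lemma tau_word_Cons_append:
  "tau_word (j # u @ y) =
    (\<Sum>p<length u. if u ! p = j then tau_word (take p u) * tau_word (drop (Suc p) u @ y) else 0)
    + (\<Sum>q<length y. if y ! q = j then tau_word (u @ take q y) * tau_word (drop (Suc q) y) else 0)"
  unfolding tau_word_Cons length_append sum_lessThan_add
  by (simp add: nth_append cong: if_cong)

section \<open>Cutting cyclic words\<close>

definition cyc_cut :: "nat \<Rightarrow> 'a list \<Rightarrow> 'a list" where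
  "cyc_cut k w = drop (Suc k) w @ take k w"

lemma length_cyc_cut: "k < length w \<Longrightarrow> length (cyc_cut k w) = length w - 1"
  by (simp add: cyc_cut_def)

lemma rotate_Suc_cyc_cut:
  assumes "k < length w"
  shows "rotate (Suc k) w = cyc_cut k w @ [w ! k]"
proof (cases "Suc k = length w")
  case True
  then show ?thesis
    using take_Suc_conv_app_nth[OF assms] by (simp add: cyc_cut_def)
next
  case False
  then show ?thesis
    using assms by (simp add: cyc_cut_def rotate_drop_take take_Suc_conv_app_nth)
qed

lemma cyc_cut_cyc_cut:
  assumes k: "k < length w" and q: "q < length (cyc_cut k w)"
  defines "k' \<equiv> (Suc k + q) mod length w"
  shows "cyc_cut k' w = drop (Suc q) (cyc_cut k w) @ w ! k # take q (cyc_cut k w)"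
    and "w ! k' = cyc_cut k w ! q"
proof -
  let ?v = "cyc_cut k w"
  have k': "k' < length w"
    using k unfolding k'_def by (intro mod_less_divisor) auto
  have "Suc k' mod length w = (Suc q + Suc k) mod length w"
    by (simp add: k'_def mod_Suc_eq add.commute)
  then have "rotate (Suc k') w = rotate (Suc q) (rotate (Suc k) w)"
    by (metis rotate_conv_mod rotate_rotate)
  also have "\<dots> = rotate (Suc q) (?v @ [w ! k])"
    by (simp only: rotate_Suc_cyc_cut[OF k])
  also have "\<dots> = drop (Suc q) (?v @ [w ! k]) @ take (Suc q) (?v @ [w ! k])"
    using q by (simp add: rotate_drop_take)
  also have "\<dots> = (drop (Suc q) ?v @ w ! k # take q ?v) @ [?v ! q]"
    using q by (simp add: take_Suc_conv_app_nth)
  finally have "cyc_cut k' w @ [w ! k'] = (drop (Suc q) ?v @ w ! k # take q ?v) @ [?v ! q]"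
    by (simp only: rotate_Suc_cyc_cut[OF k'])
  then show "cyc_cut k' w = drop (Suc q) ?v @ w ! k # take q ?v" and "w ! k' = ?v ! q"
    by simp_all
qed

text \<open>A pair \<open>(k, q)\<close> stands for position \<open>k\<close> of a cyclic word of length \<open>L\<close> together with
  position \<open>q\<close> of the rest \<open>cyc_cut k w\<close>; \<open>cyc_partner\<close> exchanges the roles of the two positions.\<close>

definition cyc_pairs :: "nat \<Rightarrow> (nat \<times> nat) set" where
  "cyc_pairs L = {..<L} \<times> {..<L - 1}"

definition cyc_partner :: "nat \<Rightarrow> nat \<times> nat \<Rightarrow> nat \<times> nat" where
  "cyc_partner L = (\<lambda>(k, q). ((Suc k + q) mod L, L - 2 - q))"

lemma cyc_partner_mem: "p \<in> cyc_pairs L \<Longrightarrow> cyc_partner L p \<in> cyc_pairs L"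
  by (auto simp: cyc_pairs_def cyc_partner_def)

lemma cyc_partner_involutive:
  assumes "p \<in> cyc_pairs L"
  shows "cyc_partner L (cyc_partner L p) = p"
proof -
  obtain k q where p: "p = (k, q)" and "k < L" "q < L - 1"
    using assms by (auto simp: cyc_pairs_def)
  have "(Suc ((Suc k + q) mod L) + (L - 2 - q)) mod L = (Suc (Suc k + q) + (L - 2 - q)) mod L"
    by (metis mod_Suc_eq mod_add_left_eq)
  also have "Suc (Suc k + q) + (L - 2 - q) = k + L"
    using \<open>q < L - 1\<close> by simp
  finally show ?thesis
    using \<open>k < L\<close> \<open>q < L - 1\<close> by (simp add: cyc_partner_def p)
qed

text \<open>Exchanging the two positions exchanges the two arcs between them, so the terms cancel in
  pairs. The coefficients must allow division by \<open>2\<close>.\<close>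
lemma sum_cyc_cut_pairs_antisym:
  fixes H :: "'a \<Rightarrow> 'a \<Rightarrow> 'a list \<Rightarrow> 'a list \<Rightarrow> 'b::real_vector"
  assumes antisym: "\<And>a b A B. H b a B A = - H a b A B"
  shows "(\<Sum>k<length w. \<Sum>q<length (cyc_cut k w).
      H (w ! k) (cyc_cut k w ! q) (take q (cyc_cut k w)) (drop (Suc q) (cyc_cut k w))) = 0"
    (is "?lhs = 0")
proof -
  let ?L = "length w"
  define I where "I = cyc_pairs ?L"
  define t where "t = (\<lambda>(k, q).
      H (w ! k) (cyc_cut k w ! q) (take q (cyc_cut k w)) (drop (Suc q) (cyc_cut k w)))"
  have t_partner: "t (cyc_partner ?L p) = - t p" if "p \<in> I" for p
  proof -
    obtain k q where p: "p = (k, q)" and k: "k < ?L" and "q < ?L - 1"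
      using \<open>p \<in> I\<close> by (auto simp: I_def cyc_pairs_def)
    let ?v = "cyc_cut k w"
    have q: "q < length ?v"
      using \<open>q < ?L - 1\<close> k by (simp add: length_cyc_cut)
    have "length (drop (Suc q) ?v) = ?L - 2 - q"
      using q k by (simp add: length_cyc_cut)
    then have "t (cyc_partner ?L p) = H (?v ! q) (w ! k) (drop (Suc q) ?v) (take q ?v)"
      using cyc_cut_cyc_cut[OF k q] by (simp add: t_def cyc_partner_def p nth_append)
    also have "\<dots> = - t p"
      unfolding t_def p prod.case by (rule antisym)
    finally show ?thesis .
  qed
  have lhs: "?lhs = sum t I"
    unfolding I_def cyc_pairs_def t_def sum.cartesian_product[symmetric]
    by (intro sum.cong) (simp_all add: length_cyc_cut)
  have "sum t I = sum (\<lambda>p. t (cyc_partner ?L p)) I"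
    by (rule sum.reindex_bij_witness[where i = "cyc_partner ?L" and j = "cyc_partner ?L"])
      (simp_all add: I_def cyc_partner_mem cyc_partner_involutive)
  also have "\<dots> = - sum t I"
    using t_partner by (simp add: sum_negf)
  finally have "sum t I + sum t I = 0"
    by (metis right_minus)
  then have "(2::real) *\<^sub>R sum t I = 0"
    by (simp only: scaleR_2)
  then show ?thesis
    using lhs by simp
qed

section \<open>Words and doubled words\<close>

definition words :: "'a set \<Rightarrow> nat \<Rightarrow> 'a list set" where
  "words A n = {xs. set xs \<subseteq> A \<and> length xs = n}"

lemma finite_words: "finite A \<Longrightarrow> finite (words A n)"
  by (simp add: words_def finite_lists_length_eq)

lemma sum_words_Suc:
  "(\<Sum>xs\<in>words A (Suc n). f xs) = (\<Sum>a\<in>A. \<Sum>xs\<in>words A n. f (a # xs))"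
proof -
  have "(\<Sum>xs\<in>words A (Suc n). f xs) = (\<Sum>(xs, a)\<in>words A n \<times> A. f (a # xs))"
    unfolding words_def lists_length_Suc_eq
    by (subst sum.reindex) (auto simp: inj_on_def case_prod_unfold)
  then show ?thesis
    by (simp add: sum.cartesian_product[symmetric] sum.swap[of _ A])
qed

lemma sum_words_split_at:
  fixes f g :: "'a list \<Rightarrow> 'b::semiring_0"
  assumes "finite A" "x \<in> A" "i < n"
  shows "(\<Sum>xs\<in>words A n. if xs ! i = x then f (take i xs) * g (drop (Suc i) xs) else 0)
       = (\<Sum>ys\<in>words A i. f ys) * (\<Sum>zs\<in>words A (n - Suc i). g zs)"
proof -
  have "(\<Sum>xs\<in>words A n. if xs ! i = x then f (take i xs) * g (drop (Suc i) xs) else 0)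
      = (\<Sum>xs\<in>{xs\<in>words A n. xs ! i = x}. f (take i xs) * g (drop (Suc i) xs))"
    using assms by (simp add: sum.inter_filter finite_words)
  also have "\<dots> = (\<Sum>(ys, zs)\<in>words A i \<times> words A (n - Suc i). f ys * g zs)"
  proof (rule sum.reindex_bij_witness[where i = "\<lambda>(ys, zs). ys @ x # zs"
        and j = "\<lambda>xs. (take i xs, drop (Suc i) xs)"])
    fix xs
    assume "xs \<in> {xs\<in>words A n. xs ! i = x}"
    then show "(\<lambda>(ys, zs). ys @ x # zs) (take i xs, drop (Suc i) xs) = xs"
      and "(take i xs, drop (Suc i) xs) \<in> words A i \<times> words A (n - Suc i)"
      using assms id_take_nth_drop[of i xs] set_take_subset[of i xs] set_drop_subset[of "Suc i" xs]
      by (auto simp: words_def)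
  next
    fix p
    assume "p \<in> words A i \<times> words A (n - Suc i)"
    moreover obtain ys zs where "p = (ys, zs)"
      by fastforce
    ultimately show "(take i ((\<lambda>(ys, zs). ys @ x # zs) p), drop (Suc i) ((\<lambda>(ys, zs). ys @ x # zs) p)) = p"
      and "(\<lambda>(ys, zs). ys @ x # zs) p \<in> {xs\<in>words A n. xs ! i = x}"
      using assms by (auto simp: words_def nth_append)
  qed simp
  also have "\<dots> = (\<Sum>ys\<in>words A i. f ys) * (\<Sum>zs\<in>words A (n - Suc i). g zs)"
    by (simp add: sum_product sum.cartesian_product[symmetric])
  finally show ?thesis .
qed

lemma sum_words_cyc_cut:
  assumes "finite A" "x \<in> A" "i \<le> n"
  shows "(\<Sum>xs\<in>words A (Suc n). if xs ! i = x then h (cyc_cut i xs) else 0) = (\<Sum>ys\<in>words A n. h ys)"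
proof -
  have "(\<Sum>xs\<in>words A (Suc n). if xs ! i = x then h (cyc_cut i xs) else 0)
      = (\<Sum>xs\<in>{xs\<in>words A (Suc n). xs ! i = x}. h (cyc_cut i xs))"
    using assms by (simp add: sum.inter_filter finite_words)
  also have "\<dots> = (\<Sum>ys\<in>words A n. h ys)"
  proof (rule sum.reindex_bij_witness[where i = "\<lambda>ys. drop (n - i) ys @ x # take (n - i) ys"
        and j = "cyc_cut i"])
    fix xs
    assume "xs \<in> {xs\<in>words A (Suc n). xs ! i = x}"
    then show "drop (n - i) (cyc_cut i xs) @ x # take (n - i) (cyc_cut i xs) = xs"
      and "cyc_cut i xs \<in> words A n"
      using assms id_take_nth_drop[of i xs] set_take_subset[of i xs] set_drop_subset[of "Suc i" xs]
      by (auto simp: words_def cyc_cut_def)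
  next
    fix ys
    assume "ys \<in> words A n"
    then show "cyc_cut i (drop (n - i) ys @ x # take (n - i) ys) = ys"
      and "drop (n - i) ys @ x # take (n - i) ys \<in> {xs\<in>words A (Suc n). xs ! i = x}"
      using assms set_take_subset[of "n - i" ys] set_drop_subset[of "n - i" ys]
      by (auto simp: words_def cyc_cut_def nth_append)
  qed simp
  finally show ?thesis .
qed

definition doubled :: "'a list \<Rightarrow> 'a list" where
  "doubled xs = concat (map (\<lambda>x. [x, x]) xs)"

lemma doubled_Nil [simp]: "doubled [] = []"
  and doubled_Cons [simp]: "doubled (x # xs) = x # x # doubled xs"
  and doubled_append [simp]: "doubled (xs @ ys) = doubled xs @ doubled ys"
  by (simp_all add: doubled_def)

lemma length_doubled [simp]: "length (doubled xs) = 2 * length xs"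
  by (induction xs) auto

lemma sum_positions_doubled:
  "(\<Sum>p<length (doubled xs). F (take p (doubled xs)) (doubled xs ! p) (drop (Suc p) (doubled xs)))
   = (\<Sum>i<length xs. F (doubled (take i xs)) (xs ! i) (xs ! i # doubled (drop (Suc i) xs))
                     + F (doubled (take i xs) @ [xs ! i]) (xs ! i) (doubled (drop (Suc i) xs)))"
proof (induction xs arbitrary: F)
  case (Cons x xs)
  have "2 * length (x # xs) = Suc (Suc (2 * length xs))"
    by simp
  then show ?case
    using Cons[of "\<lambda>A. F (x # x # A)"]
    by (simp only: length_doubled) (simp add: sum.lessThan_Suc_shift add.assoc del: sum.lessThan_Suc)
qed simp

section \<open>Noncommutative polynomials as lists of monomials\<close>

lemma inAlg_oneP: "inAlg n oneP"
  by (simp add: inAlg_def oneP_def)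

lemma inAlg_genP: "j \<in> {1..n} \<Longrightarrow> inAlg n (genP j)"
  by (simp add: inAlg_def genP_def)

lemma inAlg_addP: "inAlg n p \<Longrightarrow> inAlg n q \<Longrightarrow> inAlg n (addP p q)"
  by (auto simp: inAlg_def addP_def)

lemma inAlg_mulP: "inAlg n p \<Longrightarrow> inAlg n q \<Longrightarrow> inAlg n (mulP p q)"
  by (fastforce simp: inAlg_def mulP_def)

lemma inAlg_powP: "inAlg n p \<Longrightarrow> inAlg n (powP p k)"
  by (induction k) (simp_all add: inAlg_oneP inAlg_mulP)

lemma inAlg_negP: "inAlg n p \<Longrightarrow> inAlg n (negP p)"
  by (auto simp: inAlg_def negP_def)

lemma inAlg_cgradP: "inAlg n p \<Longrightarrow> inAlg n (cgradP j p)"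
  unfolding inAlg_def cgradP_def cgrad_word_def
  by (fastforce dest: in_set_dropD in_set_takeD)

definition linP :: "spoly \<Rightarrow> (nat list \<Rightarrow> complex) \<Rightarrow> complex" where
  "linP p X = (\<Sum>(c, w)\<leftarrow>p. c * X w)"

lemma linP_Nil [simp]: "linP [] X = 0"
  and linP_Cons [simp]: "linP ((c, w) # p) X = c * X w + linP p X"
  by (simp_all add: linP_def)

lemma tauP_eq_linP: "tauP p = linP p tau_word"
  by (simp add: tauP_def linP_def)

lemma linP_negP: "linP (negP p) X = - linP p X"
  by (induction p) (auto simp: negP_def)

lemma linP_zero [simp]: "linP p (\<lambda>w. 0) = 0"
  by (induction p) auto

lemma linP_add: "linP p (\<lambda>w. X w + Y w) = linP p X + linP p Y"
  by (induction p) (auto simp: algebra_simps)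

lemma linP_const_mult: "linP p (\<lambda>w. c * X w) = c * linP p X"
  by (induction p) (auto simp: algebra_simps)

lemma linP_diff: "linP p (\<lambda>w. X w - Y w) = linP p X - linP p Y"
  by (induction p) (auto simp: algebra_simps)

lemma linP_commute: "linP p (\<lambda>u. linP q (\<lambda>v. X u v)) = linP q (\<lambda>v. linP p (\<lambda>u. X u v))"
  by (induction p) (auto simp: linP_def sum_list_addf sum_list_const_mult algebra_simps case_prod_unfold)

lemma linP_sum: "(\<Sum>x\<in>A. linP p (Y x)) = linP p (\<lambda>w. \<Sum>x\<in>A. Y x w)"
  by (induction p) (auto simp: sum.distrib sum_distrib_left)

lemma linP_mulP: "linP (mulP p q) X = linP p (\<lambda>u. linP q (\<lambda>v. X (u @ v)))"
  by (induction p) (auto simp: mulP_def linP_def sum_list_const_mult case_prod_unfold comp_def mult.assoc)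

lemma linP_cgrad_word:
  "linP (cgrad_word j w) X = (\<Sum>k<length w. if w ! k = j then X (cyc_cut k w) else 0)"
proof -
  have filter: "linP (concat (map (\<lambda>k. if P k then [(1, f k)] else []) ks)) X
      = (\<Sum>k\<leftarrow>ks. if P k then X (f k) else 0)" for P f and ks :: "nat list"
    by (induction ks) auto
  have "linP (cgrad_word j w) X = (\<Sum>k\<leftarrow>[0..<length w]. if w ! k = j then X (cyc_cut k w) else 0)"
    unfolding cgrad_word_def cyc_cut_def by (simp add: filter)
  then show ?thesis
    by (simp add: sum_list_distinct_conv_sum_set atLeast0LessThan)
qed

lemma linP_cgradP: "linP (cgradP j p) X = linP p (\<lambda>w. linP (cgrad_word j w) X)"
  by (induction p) (auto simp: cgradP_def linP_def sum_list_const_mult case_prod_unfold comp_def mult.assoc)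

definition sum_sqP :: spoly where
  "sum_sqP = addP (mulP (genP 1) (genP 1)) (mulP (genP 2) (genP 2))"

lemma linP_powP_sum_sqP: "linP (powP sum_sqP n) X = (\<Sum>xs\<in>words {1, 2} n. X (doubled xs))"
proof (induction n arbitrary: X)
  case 0
  have "words A 0 = {[]}" for A :: "nat set"
    by (auto simp: words_def)
  then show ?case
    by (simp add: oneP_def)
next
  case (Suc n)
  have "linP (powP sum_sqP (Suc n)) X = linP sum_sqP (\<lambda>u. \<Sum>xs\<in>words {1, 2} n. X (u @ doubled xs))"
    by (simp add: linP_mulP Suc.IH)
  then show ?case
    by (simp add: sum_sqP_def addP_def mulP_def genP_def sum_words_Suc)
qed

text \<open>For \<open>Q = (\<Sum>a\<in>A. s\<^sub>a\<^sup>2)\<close> we have \<open>Q\<^sup>n = (\<Sum>xs\<in>words A n. s\<^bsub>doubled xs\<^esub>)\<close>, and the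
  lemma says \<open>\<delta>\<^sub>a(Q\<^sup>n\<^sup>+\<^sup>1) = (n + 1)(s\<^sub>a Q\<^sup>n + Q\<^sup>n s\<^sub>a)\<close>.\<close>
lemma sum_linP_cgrad_word_doubled:
  assumes "finite A" "a \<in> A"
  shows "(\<Sum>xs\<in>words A (Suc n). linP (cgrad_word a (doubled xs)) \<phi>)
    = of_nat (Suc n) * (\<Sum>xs\<in>words A n. \<phi> (a # doubled xs) + \<phi> (doubled xs @ [a]))"
proof -
  define h where "h ys = \<phi> (a # doubled ys) + \<phi> (doubled ys @ [a])" for ys
  have cgrad: "linP (cgrad_word a (doubled xs)) \<phi>
      = (\<Sum>i<Suc n. if xs ! i = a then h (cyc_cut i xs) else 0)" if "xs \<in> words A (Suc n)" for xs
    using that unfolding linP_cgrad_word cyc_cut_def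
    by (simp only: sum_positions_doubled[where F = "\<lambda>A c B. if c = a then \<phi> (B @ A) else 0"])
      (auto simp: h_def words_def intro!: sum.cong)
  have "(\<Sum>xs\<in>words A (Suc n). linP (cgrad_word a (doubled xs)) \<phi>)
      = (\<Sum>xs\<in>words A (Suc n). \<Sum>i<Suc n. if xs ! i = a then h (cyc_cut i xs) else 0)"
    by (intro sum.cong) (simp_all add: cgrad)
  also have "\<dots> = (\<Sum>i<Suc n. \<Sum>xs\<in>words A (Suc n). if xs ! i = a then h (cyc_cut i xs) else 0)"
    by (rule sum.swap)
  also have "\<dots> = (\<Sum>i<Suc n. \<Sum>ys\<in>words A n. h ys)"
    using assms by (simp add: sum_words_cyc_cut)
  finally show ?thesis
    by (simp add: h_def)
qed

section \<open>Moments involving \<open>Q\<^sup>n\<close>\<close>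

lemma tau_word_doubled_odd [simp]:
  "tau_word (doubled xs @ [x]) = 0" "tau_word (x # doubled xs) = 0"
  by (simp_all add: tau_word_odd)

lemma tau_word_Cons_doubled:
  "tau_word (x # doubled xs @ y) =
    (\<Sum>i<length xs. if xs ! i = x
       then tau_word (doubled (take i xs)) * tau_word (x # doubled (drop (Suc i) xs) @ y) else 0)
    + (\<Sum>q<length y. if y ! q = x then tau_word (doubled xs @ take q y) * tau_word (drop (Suc q) y) else 0)"
  by (subst tau_word_Cons_append)
    (simp del: length_doubled add:
      sum_positions_doubled[where F = "\<lambda>A c B. if c = x then tau_word A * tau_word (B @ y) else 0"]
      cong: if_cong)

lemma tau_word_doubled_Cons:
  "tau_word (doubled xs @ x # y) =
    (\<Sum>i<length xs. if xs ! i = x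
       then tau_word (doubled (take i xs) @ x # y) * tau_word (doubled (drop (Suc i) xs)) else 0)
    + (\<Sum>q<length y. if y ! q = x then tau_word (take q y) * tau_word (doubled xs @ drop (Suc q) y) else 0)"
proof -
  have "tau_word (doubled xs @ x # y) = tau_word (x # y @ doubled xs)"
    using tau_word_append_commute[of "doubled xs" "x # y"] by simp
  also have "\<dots> =
    (\<Sum>q<length y. if y ! q = x then tau_word (take q y) * tau_word (doubled xs @ drop (Suc q) y) else 0)
    + (\<Sum>i<length xs. if xs ! i = x
       then tau_word (doubled (take i xs) @ x # y) * tau_word (doubled (drop (Suc i) xs)) else 0)"
    by (subst tau_word_Cons_append,
        simp only: sum_positions_doubled[where F = "\<lambda>A c B. if c = x then tau_word (y @ A) * tau_word B else 0"])
      (simp add: tau_word_append_commute[of _ "doubled xs"] tau_word_append_commute[of y] cong: if_cong)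
  finally show ?thesis
    by (simp only: add.commute)
qed

text \<open>With \<open>Q = (\<Sum>a\<in>A. s\<^sub>a\<^sup>2)\<close>, these are \<open>\<tau>(Q\<^sup>n s\<^sub>v)\<close>, \<open>\<tau>(s\<^sub>x Q\<^sup>n s\<^sub>v)\<close> and
  \<open>\<tau>(Q\<^sup>n s\<^sub>x s\<^sub>v)\<close>.\<close>

definition tauQ :: "nat set \<Rightarrow> nat \<Rightarrow> nat list \<Rightarrow> complex" where
  "tauQ A n v = (\<Sum>xs\<in>words A n. tau_word (doubled xs @ v))"

definition tau_xQ :: "nat set \<Rightarrow> nat \<Rightarrow> nat \<Rightarrow> nat list \<Rightarrow> complex" where
  "tau_xQ A n x v = (\<Sum>xs\<in>words A n. tau_word (x # doubled xs @ v))"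

definition tau_Qx :: "nat set \<Rightarrow> nat \<Rightarrow> nat \<Rightarrow> nat list \<Rightarrow> complex" where
  "tau_Qx A n x v = (\<Sum>xs\<in>words A n. tau_word (doubled xs @ x # v))"

lemma tau_xQ_rec:
  assumes "finite A" "x \<in> A"
  shows "tau_xQ A n x v = (\<Sum>i<n. tauQ A i [] * tau_xQ A (n - Suc i) x v)
    + (\<Sum>q<length v. if v ! q = x then tauQ A n (take q v) * tau_word (drop (Suc q) v) else 0)"
proof -
  have "tau_xQ A n x v =
      (\<Sum>i<n. \<Sum>xs\<in>words A n. if xs ! i = x
         then tau_word (doubled (take i xs)) * tau_word (x # doubled (drop (Suc i) xs) @ v) else 0)
    + (\<Sum>q<length v. \<Sum>xs\<in>words A n. if v ! q = x
         then tau_word (doubled xs @ take q v) * tau_word (drop (Suc q) v) else 0)"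
    unfolding tau_xQ_def sum.swap[where A = "{..<n}"] sum.swap[where A = "{..<length v}"]
      sum.distrib[symmetric]
    by (intro sum.cong) (auto simp: words_def tau_word_Cons_doubled)
  also have "\<dots> = (\<Sum>i<n. tauQ A i [] * tau_xQ A (n - Suc i) x v)
    + (\<Sum>q<length v. if v ! q = x then tauQ A n (take q v) * tau_word (drop (Suc q) v) else 0)"
  proof -
    have "(\<Sum>xs\<in>words A n. if xs ! i = x
         then tau_word (doubled (take i xs)) * tau_word (x # doubled (drop (Suc i) xs) @ v) else 0)
        = tauQ A i [] * tau_xQ A (n - Suc i) x v" if "i < n" for i
      using sum_words_split_at[OF assms that, where f = "\<lambda>ys. tau_word (doubled ys)"
          and g = "\<lambda>zs. tau_word (x # doubled zs @ v)"]
      by (simp add: tauQ_def tau_xQ_def)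
    moreover have "(\<Sum>xs\<in>words A n. if v ! q = x
         then tau_word (doubled xs @ take q v) * tau_word (drop (Suc q) v) else 0)
        = (if v ! q = x then tauQ A n (take q v) * tau_word (drop (Suc q) v) else 0)" for q
      by (simp add: tauQ_def sum_distrib_right)
    ultimately show ?thesis
      by simp
  qed
  finally show ?thesis .
qed

lemma tau_Qx_rec:
  assumes "finite A" "x \<in> A"
  shows "tau_Qx A n x v = (\<Sum>i<n. tauQ A i [] * tau_Qx A (n - Suc i) x v)
    + (\<Sum>q<length v. if v ! q = x then tau_word (take q v) * tauQ A n (drop (Suc q) v) else 0)"
proof -
  have "tau_Qx A n x v =
      (\<Sum>i<n. \<Sum>xs\<in>words A n. if xs ! i = x
         then tau_word (doubled (take i xs) @ x # v) * tau_word (doubled (drop (Suc i) xs)) else 0)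
    + (\<Sum>q<length v. \<Sum>xs\<in>words A n. if v ! q = x
         then tau_word (take q v) * tau_word (doubled xs @ drop (Suc q) v) else 0)"
    unfolding tau_Qx_def sum.swap[where A = "{..<n}"] sum.swap[where A = "{..<length v}"]
      sum.distrib[symmetric]
    by (intro sum.cong) (auto simp: words_def tau_word_doubled_Cons)
  also have "\<dots> = (\<Sum>i<n. tau_Qx A i x v * tauQ A (n - Suc i) [])
    + (\<Sum>q<length v. if v ! q = x then tau_word (take q v) * tauQ A n (drop (Suc q) v) else 0)"
  proof -
    have "(\<Sum>xs\<in>words A n. if xs ! i = x
         then tau_word (doubled (take i xs) @ x # v) * tau_word (doubled (drop (Suc i) xs)) else 0)
        = tau_Qx A i x v * tauQ A (n - Suc i) []" if "i < n" for i
      using sum_words_split_at[OF assms that, where f = "\<lambda>ys. tau_word (doubled ys @ x # v)"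
          and g = "\<lambda>zs. tau_word (doubled zs)"]
      by (simp add: tauQ_def tau_Qx_def)
    moreover have "(\<Sum>xs\<in>words A n. if v ! q = x
         then tau_word (take q v) * tau_word (doubled xs @ drop (Suc q) v) else 0)
        = (if v ! q = x then tau_word (take q v) * tauQ A n (drop (Suc q) v) else 0)" for q
      by (simp add: tauQ_def sum_distrib_left)
    ultimately show ?thesis
      by simp
  qed
  also have "(\<Sum>i<n. tau_Qx A i x v * tauQ A (n - Suc i) []) = (\<Sum>i<n. tauQ A i [] * tau_Qx A (n - Suc i) x v)"
    by (subst sum.nat_diff_reindex[symmetric]) (simp add: Suc_diff_Suc mult.commute)
  finally show ?thesis .
qed

definition tau_anticomm :: "nat set \<Rightarrow> nat \<Rightarrow> nat \<Rightarrow> nat list \<Rightarrow> complex" where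
  "tau_anticomm A n x v = tau_xQ A n x v + tau_Qx A n x v"

lemma tau_anticomm_rec:
  assumes "finite A" "x \<in> A"
  shows "tau_anticomm A n x v = (\<Sum>i<n. tauQ A i [] * tau_anticomm A (n - Suc i) x v)
    + (\<Sum>q<length v. if v ! q = x then tauQ A n (take q v) * tau_word (drop (Suc q) v)
        + tau_word (take q v) * tauQ A n (drop (Suc q) v) else 0)"
proof -
  have split: "(\<Sum>q<length v. if v ! q = x then f q + g q else 0)
      = (\<Sum>q<length v. if v ! q = x then f q else 0) + (\<Sum>q<length v. if v ! q = x then g q else 0)"
    for f g :: "nat \<Rightarrow> complex"
    unfolding sum.distrib[symmetric] by (intro sum.cong) auto
  show ?thesis
    unfolding tau_anticomm_def tau_xQ_rec[OF assms, where n = n] tau_Qx_rec[OF assms, where n = n]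
    by (simp only: distrib_left sum.distrib split) (simp only: add_ac)
qed

section \<open>The divergence pairing\<close>

text \<open>If \<open>F x v = \<tau>(p\<^sub>x s\<^sub>v)\<close>, this is \<open>\<tau>(p\<^sub>2 \<delta>\<^sub>1 s\<^sub>w) - \<tau>(p\<^sub>1 \<delta>\<^sub>2 s\<^sub>w)\<close>, the pairing of \<open>s\<^sub>w\<close>
  with the divergence of the field \<open>(p\<^sub>2, -p\<^sub>1)\<close>.\<close>
definition hamiltonian_pairing :: "(nat \<Rightarrow> nat list \<Rightarrow> complex) \<Rightarrow> nat list \<Rightarrow> complex" where
  "hamiltonian_pairing F w = linP (cgrad_word 1 w) (F 2) - linP (cgrad_word 2 w) (F 1)"

lemma hamiltonian_pairing_linear:
  "hamiltonian_pairing (\<lambda>x v. (\<Sum>i<n. c i * F i x v) + R x v) w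
    = (\<Sum>i<n. c i * hamiltonian_pairing (F i) w) + hamiltonian_pairing R w"
  by (simp add: hamiltonian_pairing_def linP_add linP_sum[symmetric] linP_const_mult
      sum_subtractf right_diff_distrib)

lemma hamiltonian_pairing_symmetric_split:
  assumes "\<And>A B. G B A = G A B"
  shows "hamiltonian_pairing (\<lambda>x v. \<Sum>q<length v. if v ! q = x then G (take q v) (drop (Suc q) v) else 0) w = 0"
proof -
  define H where "H a b A B = (if a = 1 \<and> b = 2 then G A B else if a = 2 \<and> b = 1 then - G A B else 0)"
    for a b :: nat and A B
  have "hamiltonian_pairing (\<lambda>x v. \<Sum>q<length v. if v ! q = x then G (take q v) (drop (Suc q) v) else 0) w
      = (\<Sum>k<length w. \<Sum>q<length (cyc_cut k w).
          H (w ! k) (cyc_cut k w ! q) (take q (cyc_cut k w)) (drop (Suc q) (cyc_cut k w)))"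
    unfolding hamiltonian_pairing_def linP_cgrad_word sum_subtractf[symmetric]
    by (intro sum.cong) (auto simp: H_def sum_negf[symmetric] intro!: sum.cong)
  also have "\<dots> = 0"
    by (rule sum_cyc_cut_pairs_antisym) (auto simp: H_def assms)
  finally show ?thesis .
qed

lemma hamiltonian_pairing_tau_anticomm: "hamiltonian_pairing (tau_anticomm {1, 2} n) w = 0"
proof (induction n rule: less_induct)
  case (less n)
  let ?G = "\<lambda>A B. tauQ {1, 2} n A * tau_word B + tau_word A * tauQ {1, 2} n B"
  let ?R = "\<lambda>x v. \<Sum>q<length v. if v ! q = x then ?G (take q v) (drop (Suc q) v) else 0"
  have rec: "tau_anticomm {1, 2} n x
      = (\<lambda>v. (\<Sum>i<n. tauQ {1, 2} i [] * tau_anticomm {1, 2} (n - Suc i) x v) + ?R x v)"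
    if "x \<in> {1, 2}" for x
    using tau_anticomm_rec[OF _ that, where n = n] by (intro ext) simp
  have "(1::nat) \<in> {1, 2}" "(2::nat) \<in> {1, 2}"
    by simp_all
  then have "hamiltonian_pairing (tau_anticomm {1, 2} n) w
      = hamiltonian_pairing (\<lambda>x v. (\<Sum>i<n. tauQ {1, 2} i [] * tau_anticomm {1, 2} (n - Suc i) x v) + ?R x v) w"
    unfolding hamiltonian_pairing_def by (simp only: rec)
  also have "\<dots> = (\<Sum>i<n. tauQ {1, 2} i [] * hamiltonian_pairing (tau_anticomm {1, 2} (n - Suc i)) w)
      + hamiltonian_pairing ?R w"
    by (rule hamiltonian_pairing_linear)
  also have "\<dots> = 0"
    using less.IH hamiltonian_pairing_symmetric_split[of ?G] by (simp add: ac_simps)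
  finally show ?case .
qed

lemma tauP_mulP_cgradP_powP_sum_sqP:
  assumes "a \<in> {1, 2}"
  shows "tauP (mulP (cgradP a (powP sum_sqP (Suc n))) (cgradP b r))
    = of_nat (Suc n) * linP r (\<lambda>w. linP (cgrad_word b w) (tau_anticomm {1, 2} n a))"
proof -
  have "tauP (mulP (cgradP a (powP sum_sqP (Suc n))) (cgradP b r))
      = linP r (\<lambda>w. \<Sum>xs\<in>words {1, 2} (Suc n).
          linP (cgrad_word a (doubled xs)) (\<lambda>u. linP (cgrad_word b w) (\<lambda>v. tau_word (u @ v))))"
    unfolding tauP_eq_linP linP_mulP linP_cgradP linP_powP_sum_sqP
    by (subst linP_commute) (simp add: linP_sum)
  also have "\<dots> = linP r (\<lambda>w. of_nat (Suc n) * linP (cgrad_word b w) (tau_anticomm {1, 2} n a))"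
    using assms unfolding tau_anticomm_def[abs_def] tau_xQ_def[abs_def] tau_Qx_def[abs_def]
    by (simp add: sum_linP_cgrad_word_doubled linP_add linP_sum sum.distrib)
  finally show ?thesis
    by (simp add: linP_const_mult)
qed

lemma tauP_cgradP_powP_sum_sqP_swap:
  "tauP (mulP (cgradP 2 (powP sum_sqP (Suc n))) (cgradP 1 r))
    = tauP (mulP (cgradP 1 (powP sum_sqP (Suc n))) (cgradP 2 r))"
proof -
  have "tauP (mulP (cgradP 2 (powP sum_sqP (Suc n))) (cgradP 1 r))
      - tauP (mulP (cgradP 1 (powP sum_sqP (Suc n))) (cgradP 2 r))
      = of_nat (Suc n) * linP r (hamiltonian_pairing (tau_anticomm {1, 2} n))"
    using tauP_mulP_cgradP_powP_sum_sqP[of 2 n 1 r] tauP_mulP_cgradP_powP_sum_sqP[of 1 n 2 r]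
    unfolding hamiltonian_pairing_def[abs_def]
    by (simp add: right_diff_distrib linP_diff del: powP.simps)
  also have "\<dots> = 0"
    by (simp only: hamiltonian_pairing_tau_anticomm[abs_def] linP_zero mult_zero_right)
  finally show ?thesis
    by simp
qed

theorem proposition2p5:
  fixes m :: nat
  assumes "m \<ge> 1"
  shows "inVect 2 (\<lambda>j. if j = 1
            then cgradP 2 (powP (addP (mulP (genP 1) (genP 1)) (mulP (genP 2) (genP 2))) m)
            else negP (cgradP 1 (powP (addP (mulP (genP 1) (genP 1)) (mulP (genP 2) (genP 2))) m)))"
proof -
  obtain n where m: "m = Suc n"
    using assms by (cases m) auto
  have "inAlg 2 (powP sum_sqP m)"
    unfolding sum_sqP_def by (intro inAlg_powP inAlg_addP inAlg_mulP inAlg_genP) auto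
  moreover have "tauP (mulP (cgradP 2 (powP sum_sqP m)) (cgradP 1 r))
      = tauP (mulP (cgradP 1 (powP sum_sqP m)) (cgradP 2 r))" for r
    unfolding m by (rule tauP_cgradP_powP_sum_sqP_swap)
  ultimately show ?thesis
    unfolding inVect_def sum_sqP_def[symmetric]
    by (simp add: numeral_2_eq_2 tauP_eq_linP linP_mulP linP_negP inAlg_cgradP inAlg_negP)
qed

end
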